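(* For every integer $n\ge 0$ with $n+k>0$ and every $x\in\mathbb{R}$, $$\Big(1-\frac{k^2}{(n+k)^2}\Big)E_n^k(x)=E_{-n}^k(-x)-\frac{k}{n+k}\,E_{-n}^k(x).$$
   Context: Fix $k\ge 0$. Partial order on $\mathbb{Z}$: $j\triangleleft n$ iff either ($|j|<|n|$ and $|n|-|j|$ is a positive even integer) or ($|j|=|n|$ and $n<j$). Let $\delta_k(x)=|2\sin x|^{2k}$ and $(f,g)_k=\frac{1}{2\pi}\int_0^{2\pi} f(x)\overline{g(x)}\delta_k(x)\,dx$. The non-symmetric Heckman–Opdam polynomials $E_n^k$, $n\in\mathbb{Z}$, are the functions on $\mathbb{R}$ of the form $E_n^k(x)=e^{nx}+\sum_{j\triangleleft n}c_{n,j}e^{jx}$ (finite sum) such that $(E_n^k(i\,\cdot),e^{ij\,\cdot})_k=0$ for all $j\triangleleft n$. *)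

theory Defs
  imports "HOL-Analysis.Analysis"
begin

definition ho_less :: "int \<Rightarrow> int \<Rightarrow> bool" where
  "ho_less j n \<longleftrightarrow>
     (\<bar>j\<bar> < \<bar>n\<bar> \<and> even (\<bar>n\<bar> - \<bar>j\<bar>)) \<or> (\<bar>j\<bar> = \<bar>n\<bar> \<and> n < j)"

definition ho_weight :: "real \<Rightarrow> real \<Rightarrow> real" where
  "ho_weight k x = \<bar>2 * sin x\<bar> powr (2 * k)"

definition ho_inner :: "real \<Rightarrow> (real \<Rightarrow> complex) \<Rightarrow> (real \<Rightarrow> complex) \<Rightarrow> complex" where
  "ho_inner k f g = (1 / (2 * pi)) *
     integral {0..2*pi} (\<lambda>x. f x * cnj (g x) * complex_of_real (ho_weight k x))"

definition ho_expoly :: "int \<Rightarrow> (int \<Rightarrow> complex) \<Rightarrow> complex \<Rightarrow> complex" where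
  "ho_expoly n c z = (\<Sum>j\<in>insert n {j. ho_less j n}. c j * exp (of_int j * z))"

definition ho_coeffs :: "real \<Rightarrow> int \<Rightarrow> (int \<Rightarrow> complex)" where
  "ho_coeffs k n = (THE c. c n = 1 \<and>
       (\<forall>j. j \<noteq> n \<and> \<not> ho_less j n \<longrightarrow> c j = 0) \<and>
       (\<forall>j. ho_less j n \<longrightarrow>
          ho_inner k (\<lambda>x. ho_expoly n c (\<i> * of_real x))
                     (\<lambda>x. exp (\<i> * of_int j * of_real x)) = 0))"

definition HO_E :: "real \<Rightarrow> int \<Rightarrow> real \<Rightarrow> complex" where
  "HO_E k n x = ho_expoly n (ho_coeffs k n) (of_real x)"

end

theory Submission
  imports Defs
begin

text \<open>
  Writing x = it, the coefficients of E_m^k come from Gram-Schmidt orthogonalisation of the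
  characters e^{ijt} in L^2([0, 2 pi], |2 sin t|^{2k} dt); this inner product is invariant under
  the reflection t -> 2 pi - t, which maps e^{ijt} to e^{-ijt}.

  The rank one Cherednik operator T e^{jx} = (j - k) e^{jx} + 2k (e^{jx} - e^{-jx}) / (1 - e^{-2x})
  is triangular for the order and symmetric for the inner product, so every E_m is an
  eigenfunction of T whose eigenvalue is the diagonal entry of T at m. Comparing coefficients of
  e^{nx} in T E_{-n} = -(n + k) E_{-n} shows that the coefficient of e^{nx} in E_{-n} is
  kappa = k / (n + k). Therefore (E_{-n}(-x) - kappa E_{-n}(x)) / (1 - kappa^2) has leading term
  e^{nx}, all other terms below n, and is orthogonal to every e^{ijt} with j below n (by the
  reflection invariance); by uniqueness it is E_n.
\<close>

section \<open>Weighted inner product and trigonometric polynomials\<close>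

(* The junk value 0 powr 0 = 0 makes ho_weight 0 vanish at the zeros of sin; weight is the
   continuous version, equal to ho_weight off {0, pi, 2 pi}. *)
definition weight :: "real \<Rightarrow> real \<Rightarrow> real" where
  "weight k t = (if k = 0 then 1 else \<bar>2 * sin t\<bar> powr (2 * k))"

definition ho_ip :: "real \<Rightarrow> (real \<Rightarrow> complex) \<Rightarrow> (real \<Rightarrow> complex) \<Rightarrow> complex" where
  "ho_ip k f g = (1 / (2 * pi)) *
     integral {0..2*pi} (\<lambda>t. f t * cnj (g t) * complex_of_real (weight k t))"

definition expi :: "int \<Rightarrow> real \<Rightarrow> complex" where
  "expi j t = exp (\<i> * of_int j * of_real t)"

definition trigpoly :: "int set \<Rightarrow> (int \<Rightarrow> complex) \<Rightarrow> real \<Rightarrow> complex" where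
  "trigpoly S c t = (\<Sum>j\<in>S. c j * expi j t)"

lemma continuous_on_weight:
  assumes "k \<ge> 0" shows "continuous_on A (weight k)"
proof (cases "k = 0")
  case False
  with assms have "continuous_on A (\<lambda>t. \<bar>2 * sin t\<bar> powr (2 * k))"
    by (intro continuous_on_powr') (auto intro!: continuous_intros)
  with False show ?thesis by (simp add: weight_def)
qed (simp add: weight_def)

lemma weight_nonneg: "weight k t \<ge> 0"
  by (simp add: weight_def)

lemma weight_pos: "sin t \<noteq> 0 \<Longrightarrow> weight k t > 0"
  by (simp add: weight_def)

lemma weight_reflect: "weight k (2*pi - t) = weight k t"
  by (simp add: weight_def sin_diff)

lemma sin_eq_0_on_period:
  assumes "t \<in> {0..2*pi}" "sin t = 0"
  shows "t \<in> {0, pi, 2*pi}"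
proof -
  obtain i :: int where i: "t = of_int i * pi"
    using assms(2) sin_zero_iff_int2 by blast
  with assms(1) have "0 \<le> i" "i \<le> 2"
    by (auto simp: zero_le_mult_iff mult_le_cancel_right2)
       (smt (verit) mult_le_cancel_right of_int_le_iff of_int_numeral pi_gt_zero)
  then have "i = 0 \<or> i = 1 \<or> i = 2" by auto
  then show ?thesis using i by auto
qed

lemma ho_inner_eq_ho_ip: "ho_inner k f g = ho_ip k f g"
proof -
  have "integral {0..2*pi} (\<lambda>t. f t * cnj (g t) * complex_of_real (ho_weight k t))
      = integral {0..2*pi} (\<lambda>t. f t * cnj (g t) * complex_of_real (weight k t))"
  proof (rule integral_spike)
    fix t assume "t \<in> {0..2*pi} - {0, pi, 2*pi}"
    then have "sin t \<noteq> 0" using sin_eq_0_on_period by blast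
    then show "f t * cnj (g t) * complex_of_real (weight k t)
             = f t * cnj (g t) * complex_of_real (ho_weight k t)"
      by (simp add: weight_def ho_weight_def)
  qed simp
  then show ?thesis unfolding ho_inner_def ho_ip_def by simp
qed

lemma continuous_on_expi [continuous_intros]: "continuous_on A (expi j)"
  unfolding expi_def by (intro continuous_intros)

lemma continuous_on_trigpoly [continuous_intros]: "continuous_on A (trigpoly S c)"
  unfolding trigpoly_def by (intro continuous_intros)

lemma expi_0 [simp]: "expi 0 t = 1" and expi_at_0 [simp]: "expi j 0 = 1"
  by (simp_all add: expi_def)

lemma expi_add: "expi j t * expi l t = expi (j + l) t"
  by (simp add: expi_def exp_add[symmetric] algebra_simps)

lemma expi_power: "expi j t ^ i = expi (j * int i) t"
  by (induction i) (simp_all add: expi_add algebra_simps)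

lemma cnj_expi: "cnj (expi j t) = expi (-j) t"
  by (simp add: expi_def exp_cnj)

lemma expi_reflect: "expi j (2*pi - t) = expi (-j) t"
proof -
  have "\<i> * of_int j * of_real (2*pi - t) = 2 * pi * \<i> * of_int j + \<i> * of_int (-j) * of_real t"
    by (simp add: algebra_simps)
  moreover have "exp (2 * pi * \<i> * of_int j) = 1"
    using exp_integer_2pi[of "of_int j"] by (simp add: mult_ac)
  ultimately show ?thesis by (simp only: expi_def exp_add) simp
qed

lemma has_vector_derivative_expi:
  "(expi j has_vector_derivative (\<i> * of_int j * expi j t)) (at t within S)"
proof -
  have "((\<lambda>z. exp (\<i> * of_int j * z)) has_field_derivative \<i> * of_int j * exp (\<i> * of_int j * of_real t))
          (at (of_real t))"
    by (auto intro!: derivative_eq_intros)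
  from has_vector_derivative_real_field[OF this] show ?thesis
    by (simp add: expi_def[abs_def])
qed

lemma trigpoly_insert: "finite S \<Longrightarrow> j \<notin> S \<Longrightarrow> trigpoly (insert j S) c t = c j * expi j t + trigpoly S c t"
  by (simp add: trigpoly_def)

lemma trigpoly_cong_support:
  assumes "finite A" "finite B" "\<And>p. c p \<noteq> 0 \<Longrightarrow> p \<in> A \<and> p \<in> B"
  shows "trigpoly A c = trigpoly B c"
proof
  fix t
  have "trigpoly (A \<inter> B) c t = trigpoly A c t" "trigpoly (A \<inter> B) c t = trigpoly B c t"
    unfolding trigpoly_def by (rule sum.mono_neutral_left; use assms in auto)+
  then show "trigpoly A c t = trigpoly B c t" by simp
qed

lemma sum_uminus_symmetric:
  fixes S :: "'a::ab_group_add set"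
  assumes "\<And>p. -p \<in> S \<longleftrightarrow> p \<in> S"
  shows "(\<Sum>p\<in>S. f (-p)) = (\<Sum>p\<in>S. f p)"
  by (rule sum.reindex_bij_witness[of _ uminus uminus]) (auto simp: assms)

lemma trigpoly_reflect:
  assumes "\<And>p. -p \<in> S \<longleftrightarrow> p \<in> S"
  shows "trigpoly S c (2*pi - t) = trigpoly S (\<lambda>p. c (-p)) t"
  using sum_uminus_symmetric[OF assms, of "\<lambda>p. c (-p) * expi p t"]
  by (simp add: trigpoly_def expi_reflect)

lemma trigpoly_reflect_combination:
  assumes "\<And>p. -p \<in> S \<longleftrightarrow> p \<in> S"
  shows "trigpoly S (\<lambda>p. (a (-p) - \<kappa> * a p) / d) t
       = inverse d * (trigpoly S a (2*pi - t) - \<kappa> * trigpoly S a t)"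
  unfolding trigpoly_reflect[OF assms]
  by (simp add: trigpoly_def sum_distrib_left sum_subtractf[symmetric] divide_inverse algebra_simps)

lemma ho_ip_integrable:
  assumes "k \<ge> 0" "continuous_on {0..2*pi} f" "continuous_on {0..2*pi} g"
  shows "(\<lambda>t. f t * cnj (g t) * complex_of_real (weight k t)) integrable_on {0..2*pi}"
  by (intro integrable_continuous_interval continuous_intros assms continuous_on_weight
        continuous_on_of_real)

lemma ho_ip_add:
  assumes "k \<ge> 0" "continuous_on {0..2*pi} f" "continuous_on {0..2*pi} g"
    "continuous_on {0..2*pi} h"
  shows "ho_ip k (\<lambda>t. f t + g t) h = ho_ip k f h + ho_ip k g h"
  using integral_add[OF ho_ip_integrable[OF assms(1,2,4)] ho_ip_integrable[OF assms(1,3,4)]]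
  by (simp add: ho_ip_def algebra_simps)

lemma ho_ip_diff:
  assumes "k \<ge> 0" "continuous_on {0..2*pi} f" "continuous_on {0..2*pi} g"
    "continuous_on {0..2*pi} h"
  shows "ho_ip k (\<lambda>t. f t - g t) h = ho_ip k f h - ho_ip k g h"
  using integral_diff[OF ho_ip_integrable[OF assms(1,2,4)] ho_ip_integrable[OF assms(1,3,4)]]
  by (simp add: ho_ip_def left_diff_distrib right_diff_distrib)

lemma ho_ip_cmult: "ho_ip k (\<lambda>t. c * f t) h = c * ho_ip k f h"
  using integral_mult_right[of "{0..2*pi}" c "\<lambda>t. f t * cnj (h t) * complex_of_real (weight k t)"]
  by (simp add: ho_ip_def mult_ac)

lemma ho_ip_cnj: "ho_ip k g f = cnj (ho_ip k f g)"
  by (simp add: ho_ip_def integral_cnj mult_ac)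

lemma ho_ip_add_right:
  assumes "k \<ge> 0" "continuous_on {0..2*pi} f" "continuous_on {0..2*pi} g"
    "continuous_on {0..2*pi} h"
  shows "ho_ip k h (\<lambda>t. f t + g t) = ho_ip k h f + ho_ip k h g"
  using ho_ip_add[OF assms] by (simp add: ho_ip_cnj[of k h])

lemma ho_ip_sum:
  assumes "k \<ge> 0" "finite A" "\<And>a. a \<in> A \<Longrightarrow> continuous_on {0..2*pi} (f a)"
    "continuous_on {0..2*pi} h"
  shows "ho_ip k (\<lambda>t. \<Sum>a\<in>A. c a * f a t) h = (\<Sum>a\<in>A. c a * ho_ip k (f a) h)"
  using assms(2,3)
proof (induction A rule: finite_induct)
  case empty
  then show ?case by (simp add: ho_ip_def)
next
  case (insert x F)
  then have "ho_ip k (\<lambda>t. c x * f x t + (\<Sum>a\<in>F. c a * f a t)) h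
           = ho_ip k (\<lambda>t. c x * f x t) h + ho_ip k (\<lambda>t. \<Sum>a\<in>F. c a * f a t) h"
    using assms(1,4) by (intro ho_ip_add) (auto intro!: continuous_intros)
  with insert show ?case by (simp add: ho_ip_cmult)
qed

lemma ho_ip_trigpoly_right:
  assumes "k \<ge> 0" "finite S" "continuous_on {0..2*pi} f"
  shows "ho_ip k f (trigpoly S c) = (\<Sum>j\<in>S. cnj (c j) * ho_ip k f (expi j))"
proof -
  have "ho_ip k f (trigpoly S c) = cnj (ho_ip k (\<lambda>t. \<Sum>j\<in>S. c j * expi j t) f)"
    by (simp add: ho_ip_cnj[of k f] trigpoly_def[abs_def])
  also have "\<dots> = (\<Sum>j\<in>S. cnj (c j) * ho_ip k f (expi j))"
    using assms by (simp add: ho_ip_sum continuous_on_expi ho_ip_cnj[of k f])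
  finally show ?thesis .
qed

lemma integral_reflect_period:
  fixes f :: "real \<Rightarrow> 'a::euclidean_space"
  shows "integral {0..2*pi} (\<lambda>t. f (2*pi - t)) = integral {0..2*pi} f"
proof -
  have "integral {0..2*pi} (\<lambda>t. f (2*pi - t)) = integral {- 0..- (-(2*pi))} (\<lambda>t. (f \<circ> (+) (2*pi)) (- t))"
    by (simp add: o_def)
  also have "\<dots> = integral {-(2*pi)..0} (f \<circ> (+) (2*pi))"
    by (rule Henstock_Kurzweil_Integration.integral_reflect_real)
  also have "\<dots> = integral {0..2*pi} f"
    by (simp add: integral_shift_Icc_real)
  finally show ?thesis .
qed

lemma ho_ip_reflect: "ho_ip k (\<lambda>t. f (2*pi - t)) (\<lambda>t. g (2*pi - t)) = ho_ip k f g"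
  using integral_reflect_period[of "\<lambda>s. f s * cnj (g s) * complex_of_real (weight k s)"]
  by (simp add: ho_ip_def weight_reflect)

lemma ho_ip_reflect_expi: "ho_ip k (\<lambda>t. f (2*pi - t)) (expi l) = ho_ip k f (expi (-l))"
  using ho_ip_reflect[of k f "expi (-l)"] by (simp add: expi_reflect)

lemma integral_expi: "integral {0..2*pi} (expi m) = (if m = 0 then 2 * pi else 0)"
proof (cases "m = 0")
  case True
  moreover have "expi 0 = (\<lambda>t. 1)" by (simp add: fun_eq_iff)
  ultimately show ?thesis by (simp add: scaleR_conv_of_real)
next
  case False
  define F where "F t = expi m t / (\<i> * of_int m)" for t
  have "(F has_vector_derivative expi m t) (at t within {0..2*pi})" for t
    unfolding F_def[abs_def] using False has_vector_derivative_expi[of m t]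
    by (auto intro!: derivative_eq_intros)
  then have "(expi m has_integral (F (2*pi) - F 0)) {0..2*pi}"
    by (intro fundamental_theorem_of_calculus) auto
  moreover have "F (2*pi) = F 0"
    using expi_reflect[of m 0] by (simp add: F_def)
  ultimately show ?thesis using False by (simp add: integral_unique)
qed

lemma integral_trigpoly_cnj_expi:
  assumes "finite S" "j \<in> S"
  shows "integral {0..2*pi} (\<lambda>t. trigpoly S c t * cnj (expi j t)) = 2 * complex_of_real pi * c j"
proof -
  have "(\<lambda>t. trigpoly S c t * cnj (expi j t)) = (\<lambda>t. \<Sum>l\<in>S. c l * expi (l - j) t)"
    by (auto simp: trigpoly_def sum_distrib_right cnj_expi mult.assoc expi_add)
  then have "integral {0..2*pi} (\<lambda>t. trigpoly S c t * cnj (expi j t))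
           = (\<Sum>l\<in>S. c l * integral {0..2*pi} (expi (l - j)))"
    using assms by (simp add: integral_sum integrable_continuous_interval continuous_intros)
  also have "\<dots> = 2 * complex_of_real pi * c j"
    using assms by (simp add: integral_expi if_distrib sum.delta cong: if_cong)
  finally show ?thesis .
qed

lemma ho_ip_trigpoly_self_eq_0D:
  assumes k: "k \<ge> 0" and S: "finite S" "j \<in> S"
    and zero: "ho_ip k (trigpoly S c) (trigpoly S c) = 0"
  shows "c j = 0"
proof -
  define h where "h t = (cmod (trigpoly S c t))\<^sup>2 * weight k t" for t
  have h_cont: "continuous_on {0..2*pi} h"
    unfolding h_def by (intro continuous_intros continuous_on_weight k)
  have "trigpoly S c t * cnj (trigpoly S c t) * complex_of_real (weight k t) = of_real (h t)" for t
    by (simp add: h_def complex_norm_square[symmetric])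
  moreover have "integral {0..2*pi} (\<lambda>t. complex_of_real (h t)) = of_real (integral {0..2*pi} h)"
    using has_integral_of_real[OF integrable_integral[OF integrable_continuous_interval[OF h_cont]]]
    by (rule integral_unique)
  ultimately have "integral {0..2*pi} h = 0"
    using zero by (simp add: ho_ip_def)
  then have "(h has_integral 0) (cbox 0 (2*pi))"
    using integrable_integral[OF integrable_continuous_interval[OF h_cont]] by simp
  then have "h t = 0" if "t \<in> {0..2*pi}" for t
    using has_integral_0_cbox_imp_0[of 0 "2*pi" h t] that h_cont pi_gt_zero
    by (auto simp: weight_nonneg h_def)
  then have "trigpoly S c t = 0" if "t \<in> {0..2*pi} - {0, pi, 2*pi}" for t
    using that weight_pos[of t k] sin_eq_0_on_period[of t] by (fastforce simp: h_def)
  then have "integral {0..2*pi} (\<lambda>t. trigpoly S c t * cnj (expi j t)) = 0"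
    by (intro integral_spike[of "{0, pi, 2*pi}" _ "\<lambda>t. 0", simplified]) auto
  then show ?thesis using integral_trigpoly_cnj_expi[OF S, of c] by simp
qed

section \<open>Existence and uniqueness of the coefficients\<close>

lemma ho_ip_orthogonal_trigpoly:
  assumes "k \<ge> 0" "finite S" "continuous_on {0..2*pi} f" "\<And>j. j \<in> S \<Longrightarrow> ho_ip k f (expi j) = 0"
  shows "ho_ip k f (trigpoly S c) = 0"
  using assms by (simp add: ho_ip_trigpoly_right)

lemma ho_ip_self_expi_minus_trigpoly:
  assumes "k \<ge> 0" "finite F" "m \<notin> F"
  shows "ho_ip k (\<lambda>t. expi m t - trigpoly F b t) (\<lambda>t. expi m t - trigpoly F b t) \<noteq> 0"
proof -
  define c where "c p = (if p = m then 1 else - b p)" for p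
  have "(\<lambda>t. expi m t - trigpoly F b t) = trigpoly (insert m F) c"
    using assms(2,3) by (auto simp: fun_eq_iff c_def trigpoly_insert trigpoly_def
                                sum_negf[symmetric] intro!: sum.cong)
  then show ?thesis
    using ho_ip_trigpoly_self_eq_0D[of k "insert m F" m c] assms by (auto simp: c_def)
qed

lemma ho_ip_projection_exists:
  assumes k: "k \<ge> 0" and L: "finite L" and f: "continuous_on {0..2*pi} f"
  shows "\<exists>a. (\<forall>p. p \<notin> L \<longrightarrow> a p = 0) \<and> (\<forall>l\<in>L. ho_ip k (\<lambda>t. f t - trigpoly L a t) (expi l) = 0)"
  using L f
proof (induction L arbitrary: f rule: finite_induct)
  case empty
  then show ?case by auto
next
  case (insert m F)
  obtain a0 where a0: "\<forall>p. p \<notin> F \<longrightarrow> a0 p = 0" "\<forall>l\<in>F. ho_ip k (\<lambda>t. f t - trigpoly F a0 t) (expi l) = 0"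
    using insert.IH[OF insert.prems] by blast
  obtain b where b: "\<forall>p. p \<notin> F \<longrightarrow> b p = 0" "\<forall>l\<in>F. ho_ip k (\<lambda>t. expi m t - trigpoly F b t) (expi l) = 0"
    using insert.IH[of "expi m"] by (auto intro: continuous_intros)
  define g where "g t = f t - trigpoly F a0 t" for t
  define u where "u t = expi m t - trigpoly F b t" for t
  have g_cont: "continuous_on {0..2*pi} g" and u_cont: "continuous_on {0..2*pi} u"
    unfolding g_def u_def by (intro continuous_intros insert.prems)+
  have uu: "ho_ip k u u \<noteq> 0"
    using ho_ip_self_expi_minus_trigpoly[OF k insert.hyps] by (simp add: u_def[abs_def])
  define \<tau> where "\<tau> = ho_ip k g u / ho_ip k u u"
  define a where "a p = (if p = m then \<tau> else a0 p - \<tau> * b p)" for p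
  have "trigpoly F a t = trigpoly F a0 t - \<tau> * trigpoly F b t" for t
    using insert.hyps unfolding trigpoly_def
    by (auto simp: a_def sum_subtractf[symmetric] sum_distrib_left algebra_simps intro!: sum.cong)
  then have proj: "(\<lambda>t. f t - trigpoly (insert m F) a t) = (\<lambda>t. g t - \<tau> * u t)"
    using insert.hyps by (simp add: fun_eq_iff a_def g_def u_def trigpoly_insert algebra_simps)
  have proj_cont: "continuous_on {0..2*pi} (\<lambda>t. g t - \<tau> * u t)"
    by (intro continuous_intros g_cont u_cont)
  have orth_F: "ho_ip k (\<lambda>t. g t - \<tau> * u t) (expi l) = 0" if "l \<in> F" for l
    using that a0(2) b(2) k g_cont u_cont
    by (simp add: ho_ip_diff continuous_intros ho_ip_cmult g_def[abs_def] u_def[abs_def])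
  have orth_u: "ho_ip k (\<lambda>t. g t - \<tau> * u t) u = 0"
    using uu k g_cont u_cont by (simp add: ho_ip_diff continuous_intros ho_ip_cmult) (simp add: \<tau>_def)
  have "expi m = (\<lambda>t. u t + trigpoly F b t)"
    by (simp add: fun_eq_iff u_def)
  then have orth_m: "ho_ip k (\<lambda>t. g t - \<tau> * u t) (expi m) = 0"
    using orth_u ho_ip_orthogonal_trigpoly[OF k insert.hyps(1) proj_cont orth_F, of b]
    by (simp add: ho_ip_add_right k u_cont continuous_intros proj_cont)
  have "\<forall>p. p \<notin> insert m F \<longrightarrow> a p = 0"
    using a0(1) b(1) by (simp add: a_def)
  moreover have "\<forall>l\<in>insert m F. ho_ip k (\<lambda>t. f t - trigpoly (insert m F) a t) (expi l) = 0"
    unfolding proj using orth_F orth_m by blast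
  ultimately show ?case by blast
qed

lemma finite_ho_less: "finite {j. ho_less j m}"
  by (rule finite_subset[of _ "{-\<bar>m\<bar>..\<bar>m\<bar>}"]) (auto simp: ho_less_def)

lemma ho_less_irrefl: "\<not> ho_less m m"
  by (simp add: ho_less_def)

lemma ho_less_trans: "ho_less p j \<Longrightarrow> ho_less j m \<Longrightarrow> ho_less p m"
  unfolding ho_less_def by (elim disjE conjE) (auto simp: even_diff even_add)

lemma ho_less_closed:
  "j \<in> insert m {j. ho_less j m} \<Longrightarrow> ho_less p j \<Longrightarrow> p \<in> {j. ho_less j m}"
  using ho_less_trans by auto

lemma ho_less_pos:
  "n > 0 \<Longrightarrow> {j. ho_less j n} = {j. \<bar>j\<bar> < n \<and> even (n - \<bar>j\<bar>)}"
  by (auto simp: ho_less_def)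

lemma ho_less_neg:
  "n > 0 \<Longrightarrow> {j. ho_less j (-n)} = insert n {j. \<bar>j\<bar> < n \<and> even (n - \<bar>j\<bar>)}"
  by (auto simp: ho_less_def)

definition ho_spec :: "real \<Rightarrow> int \<Rightarrow> (int \<Rightarrow> complex) \<Rightarrow> bool" where
  "ho_spec k m c \<longleftrightarrow> c m = 1 \<and> (\<forall>j. j \<notin> insert m {j. ho_less j m} \<longrightarrow> c j = 0) \<and>
     (\<forall>l. ho_less l m \<longrightarrow> ho_ip k (trigpoly (insert m {j. ho_less j m}) c) (expi l) = 0)"

lemma ho_coeffs_eq_The_ho_spec: "ho_coeffs k m = (THE c. ho_spec k m c)"
proof -
  have "(\<lambda>x. ho_expoly m c (\<i> * of_real x)) = trigpoly (insert m {j. ho_less j m}) c" for c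
    by (simp add: fun_eq_iff ho_expoly_def trigpoly_def expi_def mult_ac)
  moreover have "(\<lambda>x. exp (\<i> * of_int j * of_real x)) = expi j" for j
    by (simp add: fun_eq_iff expi_def)
  ultimately show ?thesis
    unfolding ho_coeffs_def ho_spec_def ho_inner_eq_ho_ip by simp
qed

lemma ho_spec_exists:
  assumes k: "k \<ge> 0" shows "\<exists>c. ho_spec k m c"
proof -
  define L where "L = {j. ho_less j m}"
  have L: "finite L" "m \<notin> L"
    unfolding L_def using finite_ho_less ho_less_irrefl by auto
  obtain a where a: "\<forall>p. p \<notin> L \<longrightarrow> a p = 0"
    "\<forall>l\<in>L. ho_ip k (\<lambda>t. expi m t - trigpoly L a t) (expi l) = 0"
    using ho_ip_projection_exists[OF k L(1), of "expi m"] by (auto intro: continuous_intros)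
  define c where "c p = (if p = m then 1 else - a p)" for p
  have "trigpoly L c t = - trigpoly L a t" for t
    using L by (auto simp: trigpoly_def c_def sum_negf[symmetric] intro!: sum.cong)
  then have "trigpoly (insert m L) c = (\<lambda>t. expi m t - trigpoly L a t)"
    using L by (simp add: fun_eq_iff trigpoly_insert c_def)
  then have "ho_spec k m c"
    using a L unfolding ho_spec_def L_def[symmetric] by (auto simp: c_def L_def)
  then show ?thesis by blast
qed

lemma ho_spec_unique:
  assumes k: "k \<ge> 0" and c1: "ho_spec k m c1" and c2: "ho_spec k m c2"
  shows "c1 = c2"
proof -
  define L where "L = {j. ho_less j m}"
  have L: "finite L" "m \<notin> L"
    unfolding L_def using finite_ho_less ho_less_irrefl by auto
  define d where "d p = c1 p - c2 p" for p
  have d_supp: "d p = 0" if "p \<notin> L" for p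
    using c1 c2 that by (cases "p = m") (auto simp: d_def ho_spec_def L_def)
  have "trigpoly L d = trigpoly (insert m L) d"
    using L d_supp by (simp add: fun_eq_iff trigpoly_insert)
  also have "\<dots> = (\<lambda>t. trigpoly (insert m L) c1 t - trigpoly (insert m L) c2 t)"
    by (simp add: fun_eq_iff trigpoly_def d_def sum_subtractf[symmetric] algebra_simps)
  finally have d_eq: "trigpoly L d = \<dots>" .
  have "ho_ip k (trigpoly L d) (expi l) = 0" if "l \<in> L" for l
    using c1 c2 that k unfolding d_eq
    by (simp add: ho_ip_diff continuous_intros ho_spec_def L_def)
  then have "ho_ip k (trigpoly L d) (trigpoly L d) = 0"
    using k L(1) by (simp add: ho_ip_orthogonal_trigpoly continuous_intros)
  then have "d p = 0" for p
    using ho_ip_trigpoly_self_eq_0D[OF k L(1)] d_supp by blast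
  then show ?thesis by (simp add: fun_eq_iff d_def)
qed

lemma ho_spec_ho_coeffs: "k \<ge> 0 \<Longrightarrow> ho_spec k m (ho_coeffs k m)"
  unfolding ho_coeffs_eq_The_ho_spec using ho_spec_exists ho_spec_unique by (metis theI)

lemma ho_coeffs_eqI: "k \<ge> 0 \<Longrightarrow> ho_spec k m c \<Longrightarrow> ho_coeffs k m = c"
  unfolding ho_coeffs_eq_The_ho_spec using ho_spec_unique by (metis the_equality)

lemma ho_coeffs_diag: "k \<ge> 0 \<Longrightarrow> ho_coeffs k m m = 1"
  using ho_spec_ho_coeffs by (simp add: ho_spec_def)

lemma ho_coeffs_eq_0: "k \<ge> 0 \<Longrightarrow> j \<notin> insert m {j. ho_less j m} \<Longrightarrow> ho_coeffs k m j = 0"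
  using ho_spec_ho_coeffs by (simp add: ho_spec_def)

lemma ho_ip_ho_coeffs_expi:
  "k \<ge> 0 \<Longrightarrow> ho_less l m \<Longrightarrow> ho_ip k (trigpoly (insert m {j. ho_less j m}) (ho_coeffs k m)) (expi l) = 0"
  using ho_spec_ho_coeffs by (simp add: ho_spec_def)

section \<open>The Cherednik operator\<close>

definition geom_exps :: "int \<Rightarrow> int set" where
  "geom_exps m = {p. -m < p \<and> p \<le> m \<and> even (m - p)}"

(* Coefficients of T e^{jx}: the quotient (e^{jx} - e^{-jx}) / (1 - e^{-2x}) is sgn j times the
   sum of e^{px} over p in geom_exps |j|. *)
definition cherednik_coeff :: "real \<Rightarrow> int \<Rightarrow> int \<Rightarrow> complex" where
  "cherednik_coeff k j p = (if p = j then of_int j - of_real k else 0)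
     + (if p \<in> geom_exps \<bar>j\<bar> then 2 * of_int (sgn j) * of_real k else 0)"

definition cherednik_expi :: "real \<Rightarrow> int \<Rightarrow> real \<Rightarrow> complex" where
  "cherednik_expi k j = trigpoly {-\<bar>j\<bar>..\<bar>j\<bar>} (cherednik_coeff k j)"

lemma continuous_on_cherednik_expi [continuous_intros]: "continuous_on A (cherednik_expi k j)"
  unfolding cherednik_expi_def by (rule continuous_on_trigpoly)

lemma geom_exps_eq_image: "geom_exps (int m) = (\<lambda>i. int m - 2 * int i) ` {..<m}"
proof (intro set_eqI iffI)
  fix p assume p: "p \<in> geom_exps (int m)"
  then have "even (int m - p)" by (simp add: geom_exps_def)
  then obtain r where r: "int m - p = 2 * r" by (rule evenE)
  moreover have "- int m < p" "p \<le> int m" using p by (simp_all add: geom_exps_def)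
  ultimately have "r \<ge> 0" "r < int m" by linarith+
  with r show "p \<in> (\<lambda>i. int m - 2 * int i) ` {..<m}"
    by (intro image_eqI[of _ _ "nat r"]) auto
qed (auto simp: geom_exps_def)

lemma one_minus_expi_minus2:
  "(1 - expi (-2) t) * (of_real (sin t) - \<i> * of_real (cos t)) = 2 * of_real (sin t)"
proof -
  have "expi (-1) t = cos t - \<i> * sin t"
    using cis_conv_exp[of "-t"] by (simp add: expi_def cis.ctr Complex_eq)
  then have "expi (-2) t = (cos t - \<i> * sin t)\<^sup>2"
    using expi_power[of "-1" t 2] by simp
  moreover have "(complex_of_real (sin t))\<^sup>2 + (complex_of_real (cos t))\<^sup>2 = 1"
    by (metis of_real_add of_real_power sin_cos_squared_add of_real_1)
  ultimately show ?thesis using i_squared by algebra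
qed

lemma sin_times_sum_geom_exps:
  "2 * of_real (sin t) * (\<Sum>p\<in>geom_exps (int m). expi p t)
     = (expi (int m) t - expi (- int m) t) * (of_real (sin t) - \<i> * of_real (cos t))"
proof -
  have "(\<Sum>p\<in>geom_exps (int m). expi p t) = expi (int m) t * (\<Sum>i<m. expi (-2) t ^ i)"
    by (simp add: geom_exps_eq_image sum.reindex inj_on_def sum_distrib_left expi_power expi_add)
  then have "(1 - expi (-2) t) * (\<Sum>p\<in>geom_exps (int m). expi p t) = expi (int m) t * (1 - expi (-2) t ^ m)"
    by (simp add: one_diff_power_eq)
  also have "\<dots> = expi (int m) t - expi (- int m) t"
    by (simp add: expi_power expi_add algebra_simps)
  finally show ?thesis
    using one_minus_expi_minus2[of t] by (metis mult.commute mult.left_commute)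
qed

lemma cherednik_expi_closed:
  assumes "sin t \<noteq> 0"
  shows "cherednik_expi k j t = (of_int j - of_real k) * expi j t
           + of_real k * (expi j t - expi (-j) t) * (1 - \<i> * of_real (cot t))"
proof -
  define G where "G = geom_exps \<bar>j\<bar>"
  have "G \<subseteq> {-\<bar>j\<bar>..\<bar>j\<bar>}" "j \<in> {-\<bar>j\<bar>..\<bar>j\<bar>}"
    by (auto simp: G_def geom_exps_def)
  then have "cherednik_expi k j t = (of_int j - of_real k) * expi j t
      + 2 * of_int (sgn j) * of_real k * (\<Sum>p\<in>G. expi p t)"
    by (simp add: cherednik_expi_def trigpoly_def cherednik_coeff_def distrib_right sum.distrib
        if_distrib[of "\<lambda>x. x * _"] sum.If_cases Int_absorb1 sum_distrib_left G_def cong: if_cong)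
  moreover have "2 * (\<Sum>p\<in>G. expi p t) = (expi \<bar>j\<bar> t - expi (- \<bar>j\<bar>) t) * (1 - \<i> * of_real (cot t))"
    using sin_times_sum_geom_exps[of t "nat \<bar>j\<bar>"] assms by (simp add: G_def cot_def field_simps)
  moreover have "of_int (sgn j) * (expi \<bar>j\<bar> t - expi (- \<bar>j\<bar>) t) = expi j t - expi (-j) t"
    by (cases j "0::int" rule: linorder_cases) auto
  ultimately show ?thesis
    by (metis (no_types, lifting) mult.assoc mult.commute mult.left_commute)
qed

lemma cherednik_coeff_nonzeroD: "cherednik_coeff k j p \<noteq> 0 \<Longrightarrow> p = j \<or> ho_less p j"
  unfolding cherednik_coeff_def geom_exps_def ho_less_def by (auto split: if_splits)

lemma cherednik_expi_eq_trigpoly: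
  assumes "finite S" "j \<in> S" "\<And>p. ho_less p j \<Longrightarrow> p \<in> S"
  shows "cherednik_expi k j = trigpoly S (cherednik_coeff k j)"
  unfolding cherednik_expi_def
proof (rule trigpoly_cong_support)
  fix p assume "cherednik_coeff k j p \<noteq> 0"
  then have "p = j \<or> ho_less p j" by (rule cherednik_coeff_nonzeroD)
  with assms show "p \<in> {-\<bar>j\<bar>..\<bar>j\<bar>} \<and> p \<in> S" by (auto simp: ho_less_def)
qed (use assms in auto)

lemma has_real_derivative_weight:
  assumes k: "k \<ge> 0" and s: "sin t \<noteq> 0"
  shows "(weight k has_real_derivative 2 * k * cot t * weight k t) (at t)"
proof (cases "k = 0")
  case True
  then show ?thesis by (simp add: weight_def[abs_def])
next
  case False
  have "\<bar>2 * sin x\<bar> powr (2 * k) = ((2 * sin x)\<^sup>2) powr k" for x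
    using False by (cases "sin x = 0") (simp_all add: powr_powr[symmetric] powr_numeral)
  then have weight_eq: "weight k = (\<lambda>t. ((2 * sin t)\<^sup>2) powr k)"
    using False by (simp add: fun_eq_iff weight_def)
  have "((\<lambda>t. (2 * sin t)\<^sup>2) has_real_derivative 2 * (2 * sin t) * (2 * cos t)) (at t)"
    by (auto intro!: derivative_eq_intros)
  moreover have "(2 * sin t)\<^sup>2 > 0" using s by simp
  ultimately have "((\<lambda>t. ((2 * sin t)\<^sup>2) powr k) has_real_derivative
      ((2 * sin t)\<^sup>2) powr k * (0 * ln ((2 * sin t)\<^sup>2) + 2 * (2 * sin t) * (2 * cos t) * k / (2 * sin t)\<^sup>2)) (at t)"
    by (intro DERIV_powr DERIV_const)
  with s show ?thesis
    unfolding weight_eq by (simp add: cot_def field_simps power2_eq_square)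
qed

lemma cherednik_expi_reflect:
  assumes "sin t \<noteq> 0"
  shows "cherednik_expi k j (2*pi - t) = (of_int j - of_real k) * expi (-j) t
           + of_real k * (expi (-j) t - expi j t) * (1 + \<i> * of_real (cot t))"
proof -
  have "sin (2*pi - t) \<noteq> 0" "cot (2*pi - t) = - cot t"
    using assms by (simp_all add: sin_diff cos_diff cot_def)
  then show ?thesis using cherednik_expi_closed[of "2*pi - t" k j] by (simp add: expi_reflect)
qed

lemma cherednik_sym_integrand:
  assumes "sin t \<noteq> 0"
  shows "(cherednik_expi k j t * cnj (expi l t) - expi j t * cnj (cherednik_expi k l t))
       + (cherednik_expi k j (2*pi - t) * cnj (expi l (2*pi - t))
          - expi j (2*pi - t) * cnj (cherednik_expi k l (2*pi - t)))
       = of_int (j - l) * (expi (j - l) t + expi (l - j) t)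
         - 2 * \<i> * of_real k * of_real (cot t) * (expi (j - l) t - expi (l - j) t)"
proof -
  define A where "A = expi j t"
  define A' where "A' = expi (-j) t"
  define B where "B = expi l t"
  define B' where "B' = expi (-l) t"
  define u where "u = 1 - \<i> * of_real (cot t)"
  define u' where "u' = 1 + \<i> * of_real (cot t)"
  have closed: "cherednik_expi k j t = (of_int j - of_real k) * A + of_real k * (A - A') * u"
    "cnj (cherednik_expi k l t) = (of_int l - of_real k) * B' + of_real k * (B' - B) * u'"
    "cherednik_expi k j (2*pi - t) = (of_int j - of_real k) * A' + of_real k * (A' - A) * u'"
    "cnj (cherednik_expi k l (2*pi - t)) = (of_int l - of_real k) * B + of_real k * (B - B') * u"
    unfolding A_def A'_def B_def B'_def u_def u'_def
    by (simp_all add: cherednik_expi_closed[OF assms] cherednik_expi_reflect[OF assms] cnj_expi)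
  have expis: "expi j (2*pi - t) = A'" "cnj (expi l t) = B'" "cnj (expi l (2*pi - t)) = B"
    "expi (j - l) t = A * B'" "expi (l - j) t = A' * B"
    unfolding A_def A'_def B_def B'_def by (simp_all add: expi_reflect cnj_expi expi_add)
  show ?thesis
    unfolding closed expis A_def[symmetric] by (simp add: u_def u'_def algebra_simps)
qed

lemma integral_eq_0_if_reflected_sum_is_derivative:
  fixes \<Phi> G :: "real \<Rightarrow> complex"
  assumes "continuous_on {0..2*pi} \<Phi>" "continuous_on {0..2*pi} G" "G (2*pi) = G 0"
    and "\<And>t. t \<in> {0<..<2*pi} - {pi} \<Longrightarrow> (G has_vector_derivative \<Phi> t + \<Phi> (2*pi - t)) (at t)"
  shows "integral {0..2*pi} \<Phi> = 0"
proof -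
  have "((\<lambda>t. \<Phi> t + \<Phi> (2*pi - t)) has_integral G (2*pi) - G 0) {0..2*pi}"
    using assms(2,4) by (intro fundamental_theorem_of_calculus_interior_strong[of "{pi}"]) auto
  moreover have "(\<lambda>t. \<Phi> (2*pi - t)) integrable_on {0..2*pi}"
    by (intro integrable_continuous_interval continuous_on_compose2[OF assms(1)] continuous_intros) auto
  ultimately have "integral {0..2*pi} \<Phi> + integral {0..2*pi} (\<lambda>t. \<Phi> (2*pi - t)) = 0"
    using integrable_continuous_interval[OF assms(1)] assms(3)
    by (simp add: integral_add[symmetric] integral_unique)
  then show ?thesis
    by (simp add: integral_reflect_period)
qed

lemma has_vector_derivative_cherednik_defect:
  assumes "k \<ge> 0" "sin t \<noteq> 0"
  shows "((\<lambda>s. - \<i> * (expi (j - l) s - expi (l - j) s) * of_real (weight k s)) has_vector_derivative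
      (of_int (j - l) * (expi (j - l) t + expi (l - j) t)
       - 2 * \<i> * of_real k * of_real (cot t) * (expi (j - l) t - expi (l - j) t)) * of_real (weight k t))
      (at t)"
  by (auto intro!: derivative_eq_intros has_vector_derivative_expi has_vector_derivative_of_real
      has_real_derivative_weight assms simp: algebra_simps)

lemma ho_ip_cherednik_expi_sym:
  assumes k: "k \<ge> 0"
  shows "ho_ip k (cherednik_expi k j) (expi l) = ho_ip k (expi j) (cherednik_expi k l)"
proof -
  define W where "W t = complex_of_real (weight k t)" for t
  define \<Phi> where "\<Phi> t = (cherednik_expi k j t * cnj (expi l t) - expi j t * cnj (cherednik_expi k l t)) * W t" for t
  define G where "G t = - \<i> * (expi (j - l) t - expi (l - j) t) * W t" for t
  have W_cont: "continuous_on {0..2*pi} W"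
    unfolding W_def by (intro continuous_on_of_real continuous_on_weight k)
  have deriv: "(G has_vector_derivative \<Phi> t + \<Phi> (2*pi - t)) (at t)" if "t \<in> {0<..<2*pi} - {pi}" for t
  proof -
    have s: "sin t \<noteq> 0" using that sin_eq_0_on_period[of t] by auto
    have "\<Phi> t + \<Phi> (2*pi - t) = (of_int (j - l) * (expi (j - l) t + expi (l - j) t)
       - 2 * \<i> * of_real k * of_real (cot t) * (expi (j - l) t - expi (l - j) t)) * W t"
      unfolding cherednik_sym_integrand[OF s, of k j l, symmetric]
      by (simp add: \<Phi>_def W_def weight_reflect distrib_right)
    with has_vector_derivative_cherednik_defect[OF k s, of j l] show ?thesis
      by (simp add: G_def[abs_def] W_def)
  qed
  have "continuous_on {0..2*pi} \<Phi>" "continuous_on {0..2*pi} G"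
    unfolding \<Phi>_def G_def cherednik_expi_def by (intro continuous_intros W_cont)+
  moreover have "G (2*pi) = G 0"
    using expi_reflect[of _ 0] weight_reflect[of k 0] by (simp add: G_def W_def)
  ultimately have "integral {0..2*pi} \<Phi> = 0"
    using deriv by (rule integral_eq_0_if_reflected_sum_is_derivative)
  moreover have "integral {0..2*pi} \<Phi>
      = integral {0..2*pi} (\<lambda>t. cherednik_expi k j t * cnj (expi l t) * W t)
      - integral {0..2*pi} (\<lambda>t. expi j t * cnj (cherednik_expi k l t) * W t)"
    unfolding \<Phi>_def W_def left_diff_distrib cherednik_expi_def
    by (intro integral_diff ho_ip_integrable k continuous_intros)
  ultimately show ?thesis
    by (simp add: ho_ip_def W_def)
qed

definition cherednik_apply :: "real \<Rightarrow> int set \<Rightarrow> (int \<Rightarrow> complex) \<Rightarrow> int \<Rightarrow> complex" where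
  "cherednik_apply k S c p = (\<Sum>j\<in>S. c j * cherednik_coeff k j p)"

lemma trigpoly_cherednik_apply:
  assumes "finite S" "\<And>j p. j \<in> S \<Longrightarrow> ho_less p j \<Longrightarrow> p \<in> S"
  shows "trigpoly S (cherednik_apply k S c) t = (\<Sum>j\<in>S. c j * cherednik_expi k j t)"
proof -
  have "trigpoly S (cherednik_apply k S c) t = (\<Sum>j\<in>S. c j * (\<Sum>p\<in>S. cherednik_coeff k j p * expi p t))"
    unfolding trigpoly_def cherednik_apply_def sum_distrib_left sum_distrib_right mult.assoc
    by (rule sum.swap)
  also have "\<dots> = (\<Sum>j\<in>S. c j * cherednik_expi k j t)"
    using assms by (intro sum.cong) (simp_all add: cherednik_expi_eq_trigpoly trigpoly_def)
  finally show ?thesis .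
qed

lemma ho_ip_cherednik_apply:
  assumes k: "k \<ge> 0" and S: "finite S" "\<And>j p. j \<in> S \<Longrightarrow> ho_less p j \<Longrightarrow> p \<in> S"
  shows "ho_ip k (trigpoly S (cherednik_apply k S c)) (expi l) = ho_ip k (trigpoly S c) (cherednik_expi k l)"
proof -
  have "trigpoly S (cherednik_apply k S c) = (\<lambda>t. \<Sum>j\<in>S. c j * cherednik_expi k j t)"
    by (intro ext trigpoly_cherednik_apply) (use S in auto)
  then have "ho_ip k (trigpoly S (cherednik_apply k S c)) (expi l) = (\<Sum>j\<in>S. c j * ho_ip k (cherednik_expi k j) (expi l))"
    using k S(1) by (simp add: ho_ip_sum continuous_intros)
  also have "\<dots> = (\<Sum>j\<in>S. c j * ho_ip k (expi j) (cherednik_expi k l))"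
    by (simp add: ho_ip_cherednik_expi_sym k)
  also have "\<dots> = ho_ip k (trigpoly S c) (cherednik_expi k l)"
    using k S(1) by (simp add: trigpoly_def[abs_def] ho_ip_sum continuous_intros)
  finally show ?thesis .
qed

section \<open>Eigenfunctions and the reflection formula\<close>

lemma cherednik_apply_ho_coeffs_support:
  assumes k: "k \<ge> 0" and p: "p \<notin> {j. ho_less j m}"
  shows "cherednik_apply k (insert m {j. ho_less j m}) (ho_coeffs k m) p = cherednik_coeff k m m * ho_coeffs k m p"
proof -
  define L where "L = {j. ho_less j m}"
  have L: "finite L" "m \<notin> L"
    unfolding L_def using finite_ho_less ho_less_irrefl by auto
  have spec: "ho_coeffs k m m = 1" "\<And>p. p \<notin> insert m L \<Longrightarrow> ho_coeffs k m p = 0"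
    using ho_coeffs_diag[OF k] ho_coeffs_eq_0[OF k] by (auto simp: L_def)
  have D0: "cherednik_coeff k j p = 0" if "j \<in> insert m L" "p \<noteq> j" for j
    using cherednik_coeff_nonzeroD[of k j p] ho_less_closed[of j m p] ho_less_irrefl[of m] that p
    by (auto simp: L_def)
  then have "(\<Sum>j\<in>L. ho_coeffs k m j * cherednik_coeff k j p) = 0"
    using p by (intro sum.neutral) (auto simp: L_def)
  then show ?thesis
    using L spec p D0[of m] by (cases "p = m") (simp_all add: cherednik_apply_def L_def[symmetric])
qed

lemma ho_coeffs_cherednik_eigen:
  assumes k: "k \<ge> 0"
  shows "cherednik_apply k (insert m {j. ho_less j m}) (ho_coeffs k m) p = cherednik_coeff k m m * ho_coeffs k m p"
proof -
  define L where "L = {j. ho_less j m}"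
  define S where "S = insert m L"
  define a where "a = ho_coeffs k m"
  define r where "r p = cherednik_apply k S a p - cherednik_coeff k m m * a p" for p
  have L: "finite L" "finite S" "m \<notin> L"
    unfolding S_def L_def using finite_ho_less ho_less_irrefl by auto
  have r_supp: "r p = 0" if "p \<notin> L" for p
    using cherednik_apply_ho_coeffs_support[OF k, of p m] that by (simp add: r_def S_def a_def L_def)
  have "trigpoly L r = trigpoly S r"
    using L r_supp by (simp add: S_def fun_eq_iff trigpoly_insert)
  also have "\<dots> = (\<lambda>t. trigpoly S (cherednik_apply k S a) t - cherednik_coeff k m m * trigpoly S a t)"
    by (simp add: fun_eq_iff trigpoly_def r_def algebra_simps sum_subtractf sum_distrib_left)
  finally have r_eq: "trigpoly L r = \<dots>" .
  have "ho_ip k (trigpoly L r) (expi l) = 0" if l: "l \<in> L" for l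
  proof -
    have closed: "\<And>j p. j \<in> S \<Longrightarrow> ho_less p j \<Longrightarrow> p \<in> S"
      using ho_less_closed by (auto simp: S_def L_def)
    have a_orth: "\<And>p. p \<in> L \<Longrightarrow> ho_ip k (trigpoly S a) (expi p) = 0"
      using ho_ip_ho_coeffs_expi[OF k] by (simp add: a_def S_def L_def)
    moreover have "cherednik_expi k l = trigpoly L (cherednik_coeff k l)"
      using l L ho_less_closed[of l m] by (intro cherednik_expi_eq_trigpoly) (auto simp: L_def)
    ultimately have "ho_ip k (trigpoly S (cherednik_apply k S a)) (expi l) = 0"
      using k L by (simp add: ho_ip_cherednik_apply[OF k L(2) closed] ho_ip_trigpoly_right continuous_intros)
    with l a_orth k show ?thesis
      unfolding r_eq by (simp add: ho_ip_diff continuous_intros ho_ip_cmult)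
  qed
  then have "ho_ip k (trigpoly L r) (trigpoly L r) = 0"
    using k L by (simp add: ho_ip_orthogonal_trigpoly continuous_intros)
  then have "r p = 0"
    using ho_ip_trigpoly_self_eq_0D[OF k L(1)] r_supp by blast
  then show ?thesis by (simp add: r_def S_def L_def a_def)
qed

lemma ho_coeffs_neg_eq_0:
  assumes "n > 0" "k \<ge> 0" "p \<notin> insert (-n) (insert n {j. \<bar>j\<bar> < n \<and> even (n - \<bar>j\<bar>)})"
  shows "ho_coeffs k (-n) p = 0"
  using ho_coeffs_eq_0[OF assms(2), of p "-n"] assms(3) ho_less_neg[OF assms(1)] by simp

lemma ho_ip_ho_coeffs_neg_expi:
  assumes n: "n > 0" and k: "k \<ge> 0" and l: "l \<in> insert n {j. \<bar>j\<bar> < n \<and> even (n - \<bar>j\<bar>)}"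
  shows "ho_ip k (trigpoly (insert (-n) (insert n {j. \<bar>j\<bar> < n \<and> even (n - \<bar>j\<bar>)})) (ho_coeffs k (-n)))
           (expi l) = 0"
proof -
  have "ho_less l (-n)"
    using l ho_less_neg[OF n] by blast
  from ho_ip_ho_coeffs_expi[OF k this] show ?thesis
    unfolding ho_less_neg[OF n] .
qed

lemma ho_coeffs_neg_at_pos:
  assumes n: "n > 0" and k: "k \<ge> 0"
  shows "ho_coeffs k (-n) n = complex_of_real (k / (of_int n + k))"
proof -
  define Ln where "Ln = {j. \<bar>j\<bar> < n \<and> even (n - \<bar>j\<bar>)}"
  define a where "a = ho_coeffs k (-n)"
  have Ln: "finite Ln" "n \<notin> Ln" "-n \<notin> Ln"
    using finite_ho_less[of n] ho_less_pos[OF n] by (auto simp: Ln_def)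
  have "a (-n) = 1"
    using ho_coeffs_diag[OF k] by (simp add: a_def)
  moreover have "cherednik_coeff k j n = 0" if "j \<in> Ln" for j
  proof -
    have "\<not> (n = j \<or> ho_less n j)" using that n by (auto simp: Ln_def ho_less_def)
    then show ?thesis using cherednik_coeff_nonzeroD by blast
  qed
  ultimately have "(- of_int n - of_real k) * a n = - 2 * of_real k + (of_int n + of_real k) * a n"
    using ho_coeffs_cherednik_eigen[OF k, of "-n" n] ho_less_neg[OF n] Ln n
    by (simp add: a_def Ln_def cherednik_apply_def cherednik_coeff_def geom_exps_def) (simp add: algebra_simps)
  moreover have "of_int n + complex_of_real k \<noteq> 0"
    using n k by (metis add_pos_nonneg of_int_0_less_iff of_real_add of_real_eq_0_iff of_real_of_int_eq
        order_less_irrefl)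
  ultimately show ?thesis
    unfolding a_def[symmetric] by (simp add: field_simps) algebra
qed

lemma one_minus_ratio_square_nonzero:
  assumes "n > 0" "k \<ge> 0"
  shows "1 - (complex_of_real (k / (of_int n + k)))\<^sup>2 \<noteq> 0"
proof -
  have "k / (of_int n + k) < 1" "0 \<le> k / (of_int n + k)" using assms by auto
  then have "(k / (of_int n + k))\<^sup>2 < 1"
    by (simp add: power_less_one_iff abs_less_iff)
  then show ?thesis
    by (metis of_real_1 of_real_eq_iff of_real_power less_irrefl eq_iff_diff_eq_0)
qed

lemma ho_coeffs_pos_eq_reflect:
  assumes n: "n > 0" and k: "k \<ge> 0"
  defines "\<kappa> \<equiv> complex_of_real (k / (of_int n + k))"
  shows "ho_coeffs k n = (\<lambda>p. (ho_coeffs k (-n) (-p) - \<kappa> * ho_coeffs k (-n) p) / (1 - \<kappa>\<^sup>2))"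
proof (rule ho_coeffs_eqI[OF k])
  define Ln where "Ln = {j. \<bar>j\<bar> < n \<and> even (n - \<bar>j\<bar>)}"
  define S where "S = insert (-n) (insert n Ln)"
  define a where "a = ho_coeffs k (-n)"
  define c where "c p = (a (-p) - \<kappa> * a p) / (1 - \<kappa>\<^sup>2)" for p
  have Ln: "finite Ln" "n \<notin> Ln" "-n \<notin> Ln" "\<And>l. l \<in> Ln \<Longrightarrow> -l \<in> Ln"
    using finite_ho_less[of n] ho_less_pos[OF n] by (auto simp: Ln_def)
  have S_sym: "-p \<in> S \<longleftrightarrow> p \<in> S" for p
    by (auto simp: S_def Ln_def)
  have a_supp: "a p = 0" if "p \<notin> S" for p
    using ho_coeffs_neg_eq_0[OF n k] that by (simp add: a_def S_def Ln_def)
  have a_orth: "ho_ip k (trigpoly S a) (expi l) = 0" if "l \<in> insert n Ln" for l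
    using ho_ip_ho_coeffs_neg_expi[OF n k] that by (simp add: a_def S_def Ln_def)
  have a_n: "a (-n) = 1" "a n = \<kappa>" and \<kappa>: "1 - \<kappa>\<^sup>2 \<noteq> 0"
    using ho_coeffs_diag[OF k] ho_coeffs_neg_at_pos[OF n k] one_minus_ratio_square_nonzero[OF n k]
    by (simp_all add: a_def \<kappa>_def)
  have c_supp: "c p = 0" if "p \<notin> insert n Ln" for p
    using a_n a_supp[of p] a_supp[of "-p"] that S_sym[of p] by (cases "p = -n") (auto simp: c_def S_def)
  then have "trigpoly (insert n Ln) c = trigpoly S c"
    using Ln by (intro trigpoly_cong_support) (auto simp: S_def)
  also have "\<dots> = (\<lambda>t. inverse (1 - \<kappa>\<^sup>2) * (trigpoly S a (2*pi - t) - \<kappa> * trigpoly S a t))"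
    unfolding c_def[abs_def] by (simp add: fun_eq_iff trigpoly_reflect_combination[OF S_sym])
  finally have c_eq: "trigpoly (insert n Ln) c = \<dots>" .
  have "ho_ip k (trigpoly (insert n Ln) c) (expi l) = 0" if l: "l \<in> Ln" for l
  proof -
    have "continuous_on {0..2*pi} (\<lambda>t. trigpoly S a (2*pi - t))"
      by (intro continuous_on_compose2[OF continuous_on_trigpoly[of UNIV]] continuous_intros) auto
    with a_orth[of l] a_orth[of "-l"] l Ln(4)[OF l] k show ?thesis
      by (simp add: c_eq ho_ip_cmult ho_ip_diff ho_ip_reflect_expi continuous_intros)
  qed
  moreover have "c n = 1"
    using a_n \<kappa> by (simp add: c_def power2_eq_square)
  moreover have "{j. ho_less j n} = Ln"
    using ho_less_pos[OF n] by (simp add: Ln_def)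
  ultimately show "ho_spec k n c"
    using c_supp unfolding ho_spec_def by auto
qed

lemma HO_E_eq_sum:
  assumes "k \<ge> 0" "finite S" "insert m {j. ho_less j m} \<subseteq> S"
  shows "HO_E k m x = (\<Sum>j\<in>S. ho_coeffs k m j * exp (of_int j * of_real x))"
  unfolding HO_E_def ho_expoly_def
  using ho_coeffs_eq_0[OF assms(1)] assms(2,3) by (intro sum.mono_neutral_left) auto

lemma HO_E_pos_reflect:
  assumes n: "n > 0" and k: "k \<ge> 0"
  defines "\<kappa> \<equiv> complex_of_real (k / (of_int n + k))"
  shows "(1 - \<kappa>\<^sup>2) * HO_E k n x = HO_E k (-n) (-x) - \<kappa> * HO_E k (-n) x"
proof -
  define S where "S = {p. \<bar>p\<bar> \<le> n \<and> even (n - \<bar>p\<bar>)}"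
  define a where "a = ho_coeffs k (-n)"
  define e where "e j y = exp (of_int j * complex_of_real y)" for j y
  have S: "finite S" "insert n {j. ho_less j n} \<subseteq> S" "insert (-n) {j. ho_less j (-n)} \<subseteq> S"
  proof -
    show "finite S" by (rule finite_subset[of _ "{-n..n}"]) (auto simp: S_def)
  qed (use n in \<open>auto simp: S_def ho_less_def\<close>)
  have "-p \<in> S \<longleftrightarrow> p \<in> S" for p
    by (simp add: S_def)
  then have "HO_E k (-n) (-x) = (\<Sum>j\<in>S. a (-j) * e j x)"
    using HO_E_eq_sum[OF k S(1,3), of "-x"] sum_uminus_symmetric[of S "\<lambda>j. a (-j) * e j x"]
    by (simp add: a_def e_def)
  moreover have "HO_E k (-n) x = (\<Sum>j\<in>S. a j * e j x)"
    using HO_E_eq_sum[OF k S(1,3)] by (simp add: a_def e_def)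
  moreover have "(1 - \<kappa>\<^sup>2) * HO_E k n x = (\<Sum>j\<in>S. (a (-j) - \<kappa> * a j) * e j x)"
  proof -
    have "1 - \<kappa>\<^sup>2 \<noteq> 0"
      using one_minus_ratio_square_nonzero[OF n k] by (simp add: \<kappa>_def)
    then show ?thesis
      using HO_E_eq_sum[OF k S(1,2)] ho_coeffs_pos_eq_reflect[OF n k]
      by (simp add: a_def e_def \<kappa>_def sum_distrib_left)
  qed
  ultimately show ?thesis
    by (simp add: sum_distrib_left sum_subtractf[symmetric] algebra_simps)
qed

theorem mainTheorem4:
  fixes k :: real and n :: int and x :: real
  assumes "k \<ge> 0" and "n \<ge> 0" and "real_of_int n + k > 0"
  shows "complex_of_real (1 - k\<^sup>2 / (real_of_int n + k)\<^sup>2) * HO_E k n x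
         = HO_E k (-n) (-x) - complex_of_real (k / (real_of_int n + k)) * HO_E k (-n) x"
proof (cases "n = 0")
  case True
  have "{j. ho_less j 0} = {}"
    by (auto simp: ho_less_def)
  then have "HO_E k 0 y = ho_coeffs k 0 0" for y
    by (simp add: HO_E_def ho_expoly_def)
  with True assms(3) show ?thesis by simp
next
  case False
  with assms HO_E_pos_reflect[of n k x] show ?thesis
    by (simp add: power_divide)
qed

end
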